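(* Let $f,g:\mathbb{R}^n\to\mathbb{R}$ satisfy assumptions (A1)–(A4) below, let $x_0\in\Omega=\{x:g(x)\le 0\}$, and suppose the bounded feasible set $\Omega_{f(x_0)}=\{x: f(x)\le f(x_0),\ g(x)\le 0\}$ is non-empty. Then for $\zeta\in[0,1]$ the vector field $\mathbf{s}_\zeta(x)=-\frac{\nabla f(x)}{|\nabla f(x)|}-\zeta\frac{\nabla g(x)}{|\nabla g(x)|}$ is Lipschitz continuous on $\Omega_{f(x_0)}$, i.e. there is a constant $L>0$ with $|\mathbf{s}_\zeta(x)-\mathbf{s}_\zeta(y)|\le L|x-y|$ for all $x,y\in\Omega_{f(x_0)}$.
   Context: Assumptions: (A1) $\lim_{|x|\to\infty} f(x)=+\infty$; (A2) $\nabla f(x)\neq 0$ for all $x\in\Omega$; (A3) $\nabla g(x)\neq 0$ for all $x\in\Omega$; (A4) $f$ and $g$ are twice continuously differentiable. $|\cdot|$ denotes the Euclidean norm. *)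

theory Defs
  imports "HOL-Analysis.Analysis"
begin

definition feasible_sublevel :: "('a \<Rightarrow> real) \<Rightarrow> ('a \<Rightarrow> real) \<Rightarrow> real \<Rightarrow> 'a set" where
  "feasible_sublevel f g c = {x. f x \<le> c \<and> g x \<le> 0}"

definition s_field :: "('a \<Rightarrow> 'a::real_normed_vector) \<Rightarrow> ('a \<Rightarrow> 'a) \<Rightarrow> real \<Rightarrow> 'a \<Rightarrow> 'a" where
  "s_field Df Dg \<zeta> x = - (Df x /\<^sub>R norm (Df x)) - \<zeta> *\<^sub>R (Dg x /\<^sub>R norm (Dg x))"

end

theory Submission
  imports Defs
begin

text \<open>
  On the compact set \<open>\<Omega>\<^sub>f\<^sub>(\<^sub>x\<^sub>0\<^sub>)\<close> the gradients are Lipschitz (their derivatives, the continuous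
  Hessians, are bounded on a ball containing it) and bounded away from zero (continuous and
  nonvanishing). Normalising a vector is Lipschitz away from the origin, with constant
  \<open>2 / m\<close> when the norm stays above \<open>m\<close>; hence both unit gradient fields, and so every
  combination \<open>s\<^sub>\<zeta>\<close> of them, are Lipschitz there.
\<close>

lemma norm_sgn_diff_le:
  fixes a b :: "'a::real_normed_vector"
  assumes "a \<noteq> 0"
  shows "norm (sgn a - sgn b) \<le> 2 * norm (a - b) / norm a"
proof -
  have na: "norm a > 0" using assms by simp
  \<comment> \<open>pass through the intermediate point \<open>b / |a|\<close>\<close>
  have to_mid: "norm (sgn a - b /\<^sub>R norm a) = norm (a - b) / norm a"
    by (simp add: sgn_div_norm scaleR_diff_right[symmetric] divide_inverse_commute)
  have from_mid: "norm (b /\<^sub>R norm a - sgn b) \<le> norm (a - b) / norm a"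
  proof (cases "b = 0")
    case False
    have "b /\<^sub>R norm a - sgn b = (inverse (norm a) - inverse (norm b)) *\<^sub>R b"
      by (simp add: sgn_div_norm scaleR_diff_left)
    also have "inverse (norm a) - inverse (norm b) = (norm b - norm a) / (norm a * norm b)"
      using na False by (simp add: field_simps)
    finally have "b /\<^sub>R norm a - sgn b = ((norm b - norm a) / (norm a * norm b)) *\<^sub>R b" .
    then have "norm (b /\<^sub>R norm a - sgn b) = \<bar>norm b - norm a\<bar> / norm a"
      using na False by (simp add: abs_div abs_mult)
    also have "\<dots> \<le> norm (a - b) / norm a"
      using na norm_triangle_ineq3[of b a] by (simp add: divide_right_mono norm_minus_commute)
    finally show ?thesis .
  qed simp
  show ?thesis
    using norm_diff_triangle_le[OF eq_refl[OF to_mid] from_mid] by simp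
qed

lemma lipschitz_on_sgn_comp:
  fixes F :: "'a::metric_space \<Rightarrow> 'b::real_normed_vector"
  assumes lip: "C-lipschitz_on K F"
    and m: "m > 0" "\<And>x. x \<in> K \<Longrightarrow> m \<le> norm (F x)"
  shows "(2 * C / m)-lipschitz_on K (\<lambda>x. sgn (F x))"
proof (rule lipschitz_onI)
  show "0 \<le> 2 * C / m"
    using lipschitz_on_nonneg[OF lip] m(1) by simp
  fix x y assume xy: "x \<in> K" "y \<in> K"
  have Fx: "m \<le> norm (F x)"
    using m(2) xy(1) .
  then have Fx_pos: "0 < norm (F x)"
    using m(1) by linarith
  have "dist (sgn (F x)) (sgn (F y)) \<le> 2 * norm (F x - F y) / norm (F x)"
    using norm_sgn_diff_le[of "F x" "F y"] Fx_pos by (simp add: dist_norm)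
  also have "\<dots> \<le> 2 * norm (F x - F y) / m"
    using Fx Fx_pos m(1) by (intro divide_left_mono) simp_all
  also have "\<dots> \<le> 2 * (C * dist x y) / m"
    using lipschitz_onD[OF lip xy] m(1) by (simp add: divide_right_mono dist_norm)
  finally show "dist (sgn (F x)) (sgn (F y)) \<le> 2 * C / m * dist x y"
    by simp
qed

lemma continuous_nonzero_norm_bounded_below:
  fixes F :: "'a::topological_space \<Rightarrow> 'b::real_normed_vector"
  assumes "compact K" "continuous_on K F" "\<And>x. x \<in> K \<Longrightarrow> F x \<noteq> 0"
  obtains m where "m > 0" "\<And>x. x \<in> K \<Longrightarrow> m \<le> norm (F x)"
proof (cases "K = {}")
  case False
  have "compact ((\<lambda>x. norm (F x)) ` K)"
    using assms(1,2) by (intro compact_continuous_image continuous_intros)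
  then obtain x1 where "x1 \<in> K" "\<And>x. x \<in> K \<Longrightarrow> norm (F x1) \<le> norm (F x)"
    using compact_attains_inf[of "(\<lambda>x. norm (F x)) ` K"] False by auto
  with assms(3) show ?thesis
    using that[of "norm (F x1)"] by auto
qed (use that[of 1] in auto)

lemma C1_imp_lipschitz_on_compact:
  fixes F :: "'a::{real_normed_vector,heine_borel} \<Rightarrow> 'b::real_normed_vector"
  assumes deriv: "\<And>x. (F has_derivative blinfun_apply (F' x)) (at x)"
    and cont: "continuous_on UNIV F'"
    and "compact K"
  obtains C where "C-lipschitz_on K F"
proof -
  obtain c R where R: "K \<subseteq> cball c R"
    using compact_imp_bounded[OF \<open>compact K\<close>] unfolding bounded_subset_cball by blast
  have "compact (F' ` cball c R)"
    by (rule compact_continuous_image[OF continuous_on_subset[OF cont]]) auto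
  then obtain B where B: "B > 0" "\<And>x. x \<in> cball c R \<Longrightarrow> norm (F' x) \<le> B"
    by (auto dest!: compact_imp_bounded simp: bounded_pos)
  have "B-lipschitz_on (cball c R) F"
  proof (rule bounded_derivative_imp_lipschitz)
    show "(F has_derivative blinfun_apply (F' x)) (at x within cball c R)" for x
      by (rule has_derivative_at_withinI[OF deriv])
    show "onorm (blinfun_apply (F' x)) \<le> B" if "x \<in> cball c R" for x
      using B(2)[OF that] by (simp add: norm_blinfun.rep_eq)
  qed (use B in auto)
  then show ?thesis
    using that lipschitz_on_subset[OF _ R] by blast
qed

lemma lipschitz_on_sgn_of_C1:
  fixes F :: "'a::{real_normed_vector,heine_borel} \<Rightarrow> 'b::real_normed_vector"
  assumes deriv: "\<And>x. (F has_derivative blinfun_apply (F' x)) (at x)"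
    and cont: "continuous_on UNIV F'"
    and K: "compact K" "\<And>x. x \<in> K \<Longrightarrow> F x \<noteq> 0"
  obtains C where "C-lipschitz_on K (\<lambda>x. sgn (F x))"
proof -
  obtain C where C: "C-lipschitz_on K F"
    using C1_imp_lipschitz_on_compact[OF deriv cont K(1)] .
  have "continuous_on K F"
    by (intro continuous_at_imp_continuous_on ballI has_derivative_continuous[OF deriv])
  then obtain m where "m > 0" "\<And>x. x \<in> K \<Longrightarrow> m \<le> norm (F x)"
    using continuous_nonzero_norm_bounded_below K by metis
  then show ?thesis
    using that[OF lipschitz_on_sgn_comp[OF C]] by simp
qed

lemma s_field_sgn: "s_field Df Dg \<zeta> = (\<lambda>x. - sgn (Df x) - \<zeta> *\<^sub>R sgn (Dg x))"
  by (simp add: s_field_def sgn_div_norm fun_eq_iff)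

lemma lipschitz_on_s_field:
  assumes "Cf-lipschitz_on K (\<lambda>x. sgn (Df x))" "Cg-lipschitz_on K (\<lambda>x. sgn (Dg x))"
  shows "(Cf + \<bar>\<zeta>\<bar> * Cg)-lipschitz_on K (s_field Df Dg \<zeta>)"
  unfolding s_field_sgn
  by (rule lipschitz_on_diff[OF lipschitz_on_minus[OF assms(1)] lipschitz_on_cmult[OF assms(2)]])

lemma compact_feasible_sublevel:
  fixes f g :: "'a::heine_borel \<Rightarrow> real"
  assumes "continuous_on UNIV f" "continuous_on UNIV g" "bounded (feasible_sublevel f g c)"
  shows "compact (feasible_sublevel f g c)"
proof -
  have "feasible_sublevel f g c = {x. f x \<le> c} \<inter> {x. g x \<le> 0}"
    by (auto simp: feasible_sublevel_def)
  moreover have "closed {x. f x \<le> c}" "closed {x. g x \<le> 0}"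
    using assms(1,2) by (auto intro: closed_Collect_le continuous_on_const)
  ultimately show ?thesis
    using assms(3) by (simp add: compact_eq_bounded_closed closed_Int)
qed

theorem lemma5p4:
  fixes f g :: "real ^ 'n \<Rightarrow> real"
    and Df Dg :: "real ^ 'n \<Rightarrow> real ^ 'n"
    and D2f D2g :: "real ^ 'n \<Rightarrow> ((real ^ 'n) \<Rightarrow>\<^sub>L (real ^ 'n))"
    and x0 :: "real ^ 'n" and \<zeta> :: real
  assumes grad_f: "\<And>x. (f has_derivative (\<lambda>h. Df x \<bullet> h)) (at x)"
    and grad_g: "\<And>x. (g has_derivative (\<lambda>h. Dg x \<bullet> h)) (at x)"
    and hess_f: "\<And>x. (Df has_derivative blinfun_apply (D2f x)) (at x)"
    and hess_g: "\<And>x. (Dg has_derivative blinfun_apply (D2g x)) (at x)"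
    and cont_f: "continuous_on UNIV D2f"
    and cont_g: "continuous_on UNIV D2g"
    and A1: "filterlim f at_top at_infinity"
    and A2: "\<And>x. g x \<le> 0 \<Longrightarrow> Df x \<noteq> 0"
    and A3: "\<And>x. g x \<le> 0 \<Longrightarrow> Dg x \<noteq> 0"
    and x0: "g x0 \<le> 0"
    and bdd: "bounded (feasible_sublevel f g (f x0))"
    and ne: "feasible_sublevel f g (f x0) \<noteq> {}"
    and zeta: "\<zeta> \<in> {0..1}"
  shows "\<exists>L>0. \<forall>x\<in>feasible_sublevel f g (f x0). \<forall>y\<in>feasible_sublevel f g (f x0).
           norm (s_field Df Dg \<zeta> x - s_field Df Dg \<zeta> y) \<le> L * norm (x - y)"
proof -
  let ?K = "feasible_sublevel f g (f x0)"
  have "continuous_on UNIV f" "continuous_on UNIV g"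
    using has_derivative_continuous[OF grad_f] has_derivative_continuous[OF grad_g]
    by (simp_all add: continuous_on_eq_continuous_at)
  then have K: "compact ?K"
    using compact_feasible_sublevel bdd by blast
  have feasible: "g x \<le> 0" if "x \<in> ?K" for x
    using that by (simp add: feasible_sublevel_def)
  obtain Cf where "Cf-lipschitz_on ?K (\<lambda>x. sgn (Df x))"
    using lipschitz_on_sgn_of_C1[OF hess_f cont_f K] A2 feasible by blast
  moreover obtain Cg where "Cg-lipschitz_on ?K (\<lambda>x. sgn (Dg x))"
    using lipschitz_on_sgn_of_C1[OF hess_g cont_g K] A3 feasible by blast
  ultimately have lip: "(Cf + \<bar>\<zeta>\<bar> * Cg)-lipschitz_on ?K (s_field Df Dg \<zeta>)"
    by (rule lipschitz_on_s_field)
  show ?thesis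
  proof (intro exI conjI ballI)
    show "Cf + \<bar>\<zeta>\<bar> * Cg + 1 > 0"
      using lipschitz_on_nonneg[OF lip] by simp
    have "(Cf + \<bar>\<zeta>\<bar> * Cg + 1)-lipschitz_on ?K (s_field Df Dg \<zeta>)"
      using lip by (rule lipschitz_on_le) simp
    then show "norm (s_field Df Dg \<zeta> x - s_field Df Dg \<zeta> y) \<le> (Cf + \<bar>\<zeta>\<bar> * Cg + 1) * norm (x - y)"
      if "x \<in> ?K" "y \<in> ?K" for x y
      using that by (rule lipschitz_on_normD)
  qed
qed

end
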